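(* Let $\Lambda=\operatorname{diag}(1,2)$. Among all $2\times2$ unimodular zerofree matrices $M$ such that $M\Lambda M^{-1}$ is also zerofree, the minimum of $\|M\Lambda M^{-1}\|$ is $4$, attained by $M=\begin{pmatrix}1&2\\1&3\end{pmatrix}$, for which $M\Lambda M^{-1}=\begin{pmatrix}-1&2\\-3&4\end{pmatrix}$.
   Context: A square integer matrix is unimodular if its determinant is $\pm1$. An invertible matrix $Z$ is zerofree if none of the entries of $Z$ and none of the entries of $Z^{-1}$ is zero. For a matrix $A$, $\|A\|$ denotes the maximum of the absolute values of its entries. *)

theory Defs
  imports "HOL-Analysis.Analysis"
begin

definition integer_matrix :: "real ^'n ^'n \<Rightarrow> bool" where
  "integer_matrix A \<longleftrightarrow> (\<forall>i j. A $ i $ j \<in> \<int>)"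

definition unimodular :: "real ^'n ^'n \<Rightarrow> bool" where
  "unimodular A \<longleftrightarrow> integer_matrix A \<and> (det A = 1 \<or> det A = -1)"

definition zerofree :: "real ^'n ^'n \<Rightarrow> bool" where
  "zerofree Z \<longleftrightarrow> invertible Z \<and> (\<forall>i j. Z $ i $ j \<noteq> 0) \<and>
     (\<forall>i j. matrix_inv Z $ i $ j \<noteq> 0)"

definition maxnorm :: "real ^'n ^'n \<Rightarrow> real" where
  "maxnorm A = Max {\<bar>A $ i $ j\<bar> | i j. True}"

definition Lam :: "real ^2 ^2" where
  "Lam = (\<chi> i j. if i = j then (if i = 1 then 1 else 2) else 0)"

definition M0 :: "real ^2 ^2" where
  "M0 = (\<chi> i j. if i = 1 then (if j = 1 then 1 else 2) else (if j = 1 then 1 else 3))"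

definition C0 :: "real ^2 ^2" where
  "C0 = (\<chi> i j. if i = 1 then (if j = 1 then -1 else 2) else (if j = 1 then -3 else 4))"

definition admissible :: "real ^2 ^2 \<Rightarrow> bool" where
  "admissible M \<longleftrightarrow> unimodular M \<and> zerofree M \<and> zerofree (M ** Lam ** matrix_inv M)"

end

theory Submission
  imports Defs
begin

text \<open>Write \<open>M = [[a, b], [c, d]]\<close> with \<open>\<delta> = det M = \<plusminus>1\<close>. The diagonal entries of
\<open>M \<Lambda> M\<^sup>-\<^sup>1\<close> are the integers \<open>p = 1 - \<delta>bc\<close> and \<open>3 - p\<close> (the trace is 3). Zerofreeness of
\<open>M\<close> excludes \<open>p = 1\<close> (as \<open>bc \<noteq> 0\<close>) and \<open>p = 2\<close> (as \<open>ad = \<delta> + bc \<noteq> 0\<close>); zerofreeness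
of \<open>M \<Lambda> M\<^sup>-\<^sup>1\<close> excludes \<open>p = 0\<close> and \<open>p = 3\<close>. Hence \<open>|p| \<ge> 4\<close> or \<open>|3 - p| \<ge> 4\<close>.\<close>

lemma matrix_inv_unique:
  fixes A B :: "'a::semiring_1^'n^'n"
  assumes "A ** B = mat 1" and "B ** A = mat 1"
  shows "matrix_inv A = B"
proof -
  have "A' = B" if "A ** A' = mat 1 \<and> A' ** A = mat 1" for A'
    by (metis that assms(2) matrix_mul_assoc matrix_mul_lid matrix_mul_rid)
  then show ?thesis
    unfolding matrix_inv_def by (metis (mono_tags, lifting) assms someI_ex)
qed

lemma matrix_inv_2x2:
  fixes A :: "real^2^2"
  assumes "det A \<noteq> 0"
  shows "matrix_inv A = (\<chi> i j. (if i = 1 then (if j = 1 then A$2$2 else - A$1$2)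
                                 else (if j = 1 then - A$2$1 else A$1$1)) / det A)"
  using assms
  by (intro matrix_inv_unique)
     (simp_all add: matrix_matrix_mult_def vec_eq_iff forall_2 sum_2 mat_def divide_simps,
      simp_all add: det_2 algebra_simps)

lemma zerofree_2x2_iff:
  fixes A :: "real^2^2"
  shows "zerofree A \<longleftrightarrow> det A \<noteq> 0 \<and> (\<forall>i j. A $ i $ j \<noteq> 0)"
  by (auto simp: zerofree_def invertible_det_nz matrix_inv_2x2 forall_2)

lemma abs_entry_le_maxnorm:
  fixes A :: "real^'n^'n"
  shows "\<bar>A $ i $ j\<bar> \<le> maxnorm A"
proof -
  have "{\<bar>A $ i $ j\<bar> | i j. True} = (\<lambda>(i, j). \<bar>A $ i $ j\<bar>) ` UNIV"
    by auto
  then show ?thesis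
    unfolding maxnorm_def by (metis (mono_tags, lifting) Max_ge finite finite_imageI mem_Collect_eq)
qed

lemma maxnorm_2x2:
  fixes A :: "real^2^2"
  shows "maxnorm A = max (max \<bar>A$1$1\<bar> \<bar>A$1$2\<bar>) (max \<bar>A$2$1\<bar> \<bar>A$2$2\<bar>)"
proof -
  have "{\<bar>A $ i $ j\<bar> | i j. True} = {\<bar>A$1$1\<bar>, \<bar>A$1$2\<bar>, \<bar>A$2$1\<bar>, \<bar>A$2$2\<bar>}"
  proof (intro equalityI subsetI)
    fix x assume "x \<in> {\<bar>A $ i $ j\<bar> | i j. True}"
    then obtain i j where "x = \<bar>A $ i $ j\<bar>" by blast
    then show "x \<in> {\<bar>A$1$1\<bar>, \<bar>A$1$2\<bar>, \<bar>A$2$1\<bar>, \<bar>A$2$2\<bar>}"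
      using exhaust_2[of i] exhaust_2[of j] by auto
  qed blast
  then show ?thesis
    unfolding maxnorm_def by (simp add: max.assoc)
qed

lemma conj_Lam_diagonal:
  fixes M :: "real^2^2"
  assumes "det M \<noteq> 0"
  shows "(M ** Lam ** matrix_inv M) $ 1 $ 1 = 1 - M$1$2 * M$2$1 / det M"
    and "(M ** Lam ** matrix_inv M) $ 2 $ 2 = 2 + M$1$2 * M$2$1 / det M"
  using assms
  by (simp_all add: matrix_inv_2x2 matrix_matrix_mult_def sum_2 Lam_def divide_simps,
      simp_all add: det_2 algebra_simps)

lemma Ints_outside_0_3_abs_ge_4:
  fixes p :: real
  assumes "p \<in> \<int>" and "p \<notin> {0, 1, 2, 3}"
  shows "4 \<le> \<bar>p\<bar> \<or> 4 \<le> \<bar>3 - p\<bar>"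
proof -
  obtain k :: int where "p = of_int k"
    using assms(1) Ints_cases by blast
  with assms(2) have "k \<notin> {0, 1, 2, 3}"
    by auto
  then have "4 \<le> \<bar>k\<bar> \<or> 4 \<le> \<bar>3 - k\<bar>"
    by auto
  then show ?thesis
    using \<open>p = of_int k\<close> by linarith
qed

lemma admissible_maxnorm_conj_Lam_ge_4:
  assumes "admissible M"
  shows "4 \<le> maxnorm (M ** Lam ** matrix_inv M)"
proof -
  define C where "C = M ** Lam ** matrix_inv M"
  define \<delta> where "\<delta> = det M"
  define p where "p = 1 - \<delta> * M$1$2 * M$2$1"
  have M_unimodular: "integer_matrix M" "\<delta> = 1 \<or> \<delta> = -1"
    using assms unfolding admissible_def unimodular_def \<delta>_def by auto
  have M_zerofree: "\<forall>i j. M $ i $ j \<noteq> 0" and C_zerofree: "\<forall>i j. C $ i $ j \<noteq> 0"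
    using assms unfolding admissible_def zerofree_2x2_iff C_def by auto
  have "\<delta> \<noteq> 0" and inverse_\<delta>: "x / \<delta> = \<delta> * x" for x
    using M_unimodular(2) by auto
  have C11: "C $ 1 $ 1 = p" and C22: "C $ 2 $ 2 = 3 - p"
    using conj_Lam_diagonal[of M] \<open>\<delta> \<noteq> 0\<close>
    unfolding C_def p_def \<delta>_def by (simp_all add: inverse_\<delta>[unfolded \<delta>_def])
  have "p \<in> \<int>"
    using M_unimodular unfolding p_def \<delta>_def integer_matrix_def by auto
  moreover have "p \<noteq> 0" "p \<noteq> 3"
    using C_zerofree C11 C22 by (metis eq_iff_diff_eq_0)+
  moreover have "p \<noteq> 1"
    using M_zerofree unfolding p_def by (simp add: \<open>\<delta> \<noteq> 0\<close>)
  moreover have "p \<noteq> 2"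
  proof -
    have "\<delta> * (M$1$1 * M$2$2) - \<delta> * M$1$2 * M$2$1 = \<delta> * \<delta>"
      by (simp add: \<delta>_def det_2 algebra_simps)
    also have "\<delta> * \<delta> = 1"
      using M_unimodular(2) by auto
    finally show ?thesis
      using M_zerofree \<open>\<delta> \<noteq> 0\<close> unfolding p_def by auto
  qed
  ultimately have "4 \<le> \<bar>C $ 1 $ 1\<bar> \<or> 4 \<le> \<bar>C $ 2 $ 2\<bar>"
    using Ints_outside_0_3_abs_ge_4 C11 C22 by auto
  then show ?thesis
    unfolding C_def by (meson abs_entry_le_maxnorm order_trans)
qed

lemma det_M0: "det M0 = 1"
  by (simp add: M0_def det_2)

lemma M0_conj_Lam: "M0 ** Lam ** matrix_inv M0 = C0"
  by (simp add: matrix_inv_2x2 det_M0, simp add: matrix_matrix_mult_def vec_eq_iff forall_2 sum_2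
      Lam_def M0_def C0_def)

lemma admissible_M0: "admissible M0"
proof -
  have "integer_matrix M0"
    by (auto simp: integer_matrix_def M0_def)
  moreover have "det C0 = 2"
    by (simp add: C0_def det_2)
  ultimately show ?thesis
    unfolding admissible_def unimodular_def zerofree_2x2_iff M0_conj_Lam det_M0
    by (simp add: forall_2 M0_def C0_def)
qed

lemma maxnorm_C0: "maxnorm C0 = 4"
  by (simp add: maxnorm_2x2 C0_def)

theorem mainTheorem7:
  shows "(\<forall>M. admissible M \<longrightarrow> maxnorm (M ** Lam ** matrix_inv M) \<ge> 4)
    \<and> admissible M0
    \<and> M0 ** Lam ** matrix_inv M0 = C0
    \<and> maxnorm C0 = 4"
  using admissible_maxnorm_conj_Lam_ge_4 admissible_M0 M0_conj_Lam maxnorm_C0 by blast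

end
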